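(* Let $w_1,w_i\ge0$ with $w_1+w_i>0$, and let $\hat\mu_1,b_1,b_i,\hat\mu_i\in\mathcal M$ satisfy $\hat\mu_i\le b_i<b_1\le\hat\mu_1$. Set $\lambda=\frac{w_1b_1+w_ib_i}{w_1+w_i}$. Then for every $y\in[\hat\mu_i,\hat\mu_1]$, $$w_1\,d(\hat\mu_1,y)+w_i\,d(\hat\mu_i,y)\ \ge\ w_1\,d(b_1,\lambda)+w_i\,d(b_i,\lambda).$$
   Context: Fix a one-parameter canonical exponential family $\{\nu_\theta\}_{\theta\in\Theta}$ ($\Theta$ an open interval): $\frac{d\nu_\theta}{d\rho}(x)=\exp(x\theta-b(\theta))$ for a reference measure $\rho$ on $\mathbb R$, with $b(\theta)=\log\int e^{x\theta}d\rho(x)$. The mean map $\theta\mapsto b'(\theta)$ is a bijection from $\Theta$ onto an open interval $\mathcal M$, so members of the family are indexed by their mean. For $\mu,\mu'\in\mathcal M$, $d(\mu,\mu')$ denotes the Kullback–Leibler divergence from the member with mean $\mu$ to the member with mean $\mu'$. *)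

theory Defs
  imports "HOL-Probability.Probability"
begin

definition cumulant :: "real measure \<Rightarrow> real \<Rightarrow> real" where
  "cumulant \<rho> \<theta> = ln (\<integral>x. exp (x * \<theta>) \<partial>\<rho>)"

definition expfam :: "real measure \<Rightarrow> real \<Rightarrow> real measure" where
  "expfam \<rho> \<theta> = density \<rho> (\<lambda>x. ennreal (exp (x * \<theta> - cumulant \<rho> \<theta>)))"

definition mean_to_param :: "real measure \<Rightarrow> real set \<Rightarrow> real \<Rightarrow> real" where
  "mean_to_param \<rho> \<Theta> \<mu> = inv_into \<Theta> (deriv (cumulant \<rho>)) \<mu>"

text \<open>d(mu, mu') = KL(nu_mu || nu_mu'), the Kullback-Leibler divergence (natural log)
  from the member with mean mu to the member with mean mu'.
  Note: the library's KL_divergence b M N is the integral of log_b (dN/dM) w.r.t. N,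
  i.e. KL(N || M).\<close>
definition kl_mean :: "real measure \<Rightarrow> real set \<Rightarrow> real \<Rightarrow> real \<Rightarrow> real" where
  "kl_mean \<rho> \<Theta> \<mu> \<mu>' =
     KL_divergence (exp 1) (expfam \<rho> (mean_to_param \<rho> \<Theta> \<mu>')) (expfam \<rho> (mean_to_param \<rho> \<Theta> \<mu>))"

end

theory Submission
  imports Defs
begin

text \<open>In mean coordinates \<open>d(a, z)\<close> is a Bregman divergence of the cumulant. It is
  nonnegative (the cumulant lies above its tangents), hence the natural parameter is monotone in
  the mean, and three-point identities show that \<open>d(a, z)\<close> only grows when \<open>a\<close> moves away
  from \<open>z\<close> or \<open>z\<close> moves away from \<open>a\<close>. So clamping \<open>y\<close> to \<open>z \<in> [b\<^sub>i, b\<^sub>1]\<close> gives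
  \<open>w\<^sub>1 d(\<mu>\<^sub>1, y) + w\<^sub>i d(\<mu>\<^sub>i, y) \<ge> w\<^sub>1 d(b\<^sub>1, z) + w\<^sub>i d(b\<^sub>i, z)\<close>, and the latter exceeds its
  value at the weighted mean \<open>\<lambda>\<close> by exactly \<open>(w\<^sub>1 + w\<^sub>i) d(\<lambda>, z) \<ge> 0\<close>.\<close>

text \<open>With \<open>T\<close> the inverse of the mean map and \<open>F = b \<circ> T\<close>, \<open>bregman_mean T F a z\<close> is
  \<open>b(T z) - b(T a) - b'(T a) (T z - T a)\<close>, because \<open>b'(T a) = a\<close>.\<close>

definition bregman_mean :: "(real \<Rightarrow> real) \<Rightarrow> (real \<Rightarrow> real) \<Rightarrow> real \<Rightarrow> real \<Rightarrow> real" where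
  "bregman_mean T F a z = (T a - T z) * a - F a + F z"

lemma bregman_mean_self [simp]: "bregman_mean T F a a = 0"
  by (simp add: bregman_mean_def)

lemma bregman_mean_weighted_eq:
  assumes "w1 + w2 \<noteq> 0" and "l = (w1 * b1 + w2 * b2) / (w1 + w2)"
  shows "w1 * bregman_mean T F b1 z + w2 * bregman_mean T F b2 z
       = w1 * bregman_mean T F b1 l + w2 * bregman_mean T F b2 l + (w1 + w2) * bregman_mean T F l z"
proof -
  have "(w1 + w2) * l = w1 * b1 + w2 * b2" using assms by simp
  then have "(w1 + w2) * l * (T l - T z) = (w1 * b1 + w2 * b2) * (T l - T z)" by simp
  then show ?thesis by (simp add: bregman_mean_def algebra_simps)
qed

locale nonneg_bregman_mean =
  fixes M :: "real set" and T F :: "real \<Rightarrow> real"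
  assumes interval: "is_interval M"
    and nonneg: "a \<in> M \<Longrightarrow> z \<in> M \<Longrightarrow> 0 \<le> bregman_mean T F a z"
begin

abbreviation D where "D \<equiv> bregman_mean T F"

lemma param_mono:
  assumes "a \<in> M" "z \<in> M" "a \<le> z"
  shows "T a \<le> T z"
proof (rule ccontr)
  assume "\<not> T a \<le> T z"
  moreover from this have "a < z" using assms(3) by (cases "a = z") auto
  ultimately have "(T a - T z) * (a - z) < 0" by (simp add: mult_pos_neg)
  moreover have "D a z + D z a = (T a - T z) * (a - z)" by (simp add: bregman_mean_def algebra_simps)
  ultimately show False using nonneg[OF assms(1,2)] nonneg[OF assms(2,1)] by linarith
qed

lemma mem_between:
  assumes "a \<in> M" "c \<in> M" "a \<le> b" "b \<le> c"
  shows "b \<in> M"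
  using mem_is_interval_1_I[OF interval assms] .

lemma bregman_mean_mono_left:
  assumes "a \<in> M" "b \<in> M" "z \<in> M" and between: "z \<le> b \<and> b \<le> a \<or> a \<le> b \<and> b \<le> z"
  shows "D b z \<le> D a z"
proof -
  have "D a z - D b z = D a b + (T b - T z) * (a - b)"
    by (simp add: bregman_mean_def algebra_simps)
  moreover have "(T b - T z) * (a - b) \<ge> 0"
    using between param_mono[of z b] param_mono[of b z] assms(2,3)
    by (auto intro: mult_nonneg_nonneg mult_nonpos_nonpos)
  ultimately show ?thesis using nonneg[OF assms(1,2)] by linarith
qed

lemma bregman_mean_mono_right:
  assumes "b \<in> M" "z \<in> M" "z' \<in> M" and between: "b \<le> z \<and> z \<le> z' \<or> z' \<le> z \<and> z \<le> b"
  shows "D b z \<le> D b z'"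
proof -
  have "D b z' - D b z = D z z' + (T z - T z') * (b - z)"
    by (simp add: bregman_mean_def algebra_simps)
  moreover have "(T z - T z') * (b - z) \<ge> 0"
    using between param_mono[of z z'] param_mono[of z' z] assms(2,3)
    by (auto intro: mult_nonneg_nonneg mult_nonpos_nonpos)
  ultimately show ?thesis using nonneg[OF assms(2,3)] by linarith
qed

lemma weighted_bregman_mean_min:
  assumes "w1 + w2 > 0" "z \<in> M" "l \<in> M" "l = (w1 * b1 + w2 * b2) / (w1 + w2)"
  shows "w1 * D b1 l + w2 * D b2 l \<le> w1 * D b1 z + w2 * D b2 z"
  using bregman_mean_weighted_eq[of w1 w2 l b1 b2 T F z] nonneg[OF assms(3,2)] assms(1,4)
  by (simp add: add_increasing2)

lemma bregman_mean_clamp: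
  assumes "a1 \<in> M" "a2 \<in> M" "a2 \<le> b2" "b2 \<le> b1" "b1 \<le> a1" "a2 \<le> y" "y \<le> a1"
  obtains z where "b2 \<le> z" "z \<le> b1" "D b1 z \<le> D a1 y" "D b2 z \<le> D a2 y"
proof -
  have M: "b1 \<in> M" "b2 \<in> M" "y \<in> M"
    using mem_between[OF assms(2,1)] assms(3-7) by simp_all
  consider "y < b2" | "b2 \<le> y" "y \<le> b1" | "b1 < y" by linarith
  then show thesis
  proof cases
    case 1
    have "D b1 b2 \<le> D b1 y" using bregman_mean_mono_right[of b1 b2 y] M 1 assms by auto
    also have "\<dots> \<le> D a1 y" using bregman_mean_mono_left[of a1 b1 y] M 1 assms by auto
    finally show thesis using that[of b2] nonneg[of a2 y] M assms by auto
  next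
    case 2
    then show thesis
      using that[of y] bregman_mean_mono_left[of a1 b1 y] bregman_mean_mono_left[of a2 b2 y] M assms
      by auto
  next
    case 3
    have "D b2 b1 \<le> D b2 y" using bregman_mean_mono_right[of b2 b1 y] M 3 assms by auto
    also have "\<dots> \<le> D a2 y" using bregman_mean_mono_left[of a2 b2 y] M 3 assms by auto
    finally show thesis using that[of b1] nonneg[of a1 y] M assms by auto
  qed
qed

theorem weighted_bregman_mean_bound:
  assumes "w1 \<ge> 0" "w2 \<ge> 0" "w1 + w2 > 0" "a1 \<in> M" "a2 \<in> M"
    and "a2 \<le> b2" "b2 \<le> b1" "b1 \<le> a1" "y \<in> {a2..a1}"
  shows "w1 * D b1 ((w1 * b1 + w2 * b2) / (w1 + w2)) + w2 * D b2 ((w1 * b1 + w2 * b2) / (w1 + w2))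
       \<le> w1 * D a1 y + w2 * D a2 y"
proof -
  define l where "l = (w1 * b1 + w2 * b2) / (w1 + w2)"
  have "b2 \<le> l" "l \<le> b1"
    using assms(1-3,7) mult_left_mono[of b2 b1 w1] mult_left_mono[of b2 b1 w2]
    by (simp_all add: l_def field_simps)
  obtain z where z: "b2 \<le> z" "z \<le> b1" "D b1 z \<le> D a1 y" "D b2 z \<le> D a2 y"
    using assms(9) by (auto intro: bregman_mean_clamp[OF assms(4-8)])
  have M: "z \<in> M" "l \<in> M"
    using mem_between[OF assms(5,4)] z(1,2) \<open>b2 \<le> l\<close> \<open>l \<le> b1\<close> assms(6-8) by simp_all
  have "w1 * D b1 l + w2 * D b2 l \<le> w1 * D b1 z + w2 * D b2 z"
    using weighted_bregman_mean_min[OF assms(3) M(1,2) l_def] .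
  also have "\<dots> \<le> w1 * D a1 y + w2 * D a2 y"
    using z(3,4) assms(1,2) by (intro add_mono mult_left_mono)
  finally show ?thesis unfolding l_def .
qed

end

locale exp_family =
  fixes \<rho> :: "real measure" and \<Theta> :: "real set"
  assumes sets_\<rho>: "sets \<rho> = sets borel"
    and open_\<Theta>: "open \<Theta>" and \<Theta>_nonempty: "\<Theta> \<noteq> {}"
    and integrable_exp: "\<theta> \<in> \<Theta> \<Longrightarrow> integrable \<rho> (\<lambda>x. exp (x * \<theta>))"
    and emeasure_space_nonzero: "emeasure \<rho> (space \<rho>) \<noteq> 0"
begin

definition partition :: "real \<Rightarrow> real" where
  "partition \<theta> = (\<integral>x. exp (x * \<theta>) \<partial>\<rho>)"

definition first_moment :: "real \<Rightarrow> real" where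
  "first_moment \<theta> = (\<integral>x. x * exp (x * \<theta>) \<partial>\<rho>)"

definition mean :: "real \<Rightarrow> real" where
  "mean \<theta> = first_moment \<theta> / partition \<theta>"

lemma cumulant_eq: "cumulant \<rho> \<theta> = ln (partition \<theta>)"
  unfolding cumulant_def partition_def ..

lemma borel_measurable_\<rho>: "f \<in> borel_measurable borel \<Longrightarrow> f \<in> borel_measurable \<rho>"
  by (subst measurable_cong_sets[OF sets_\<rho> refl])

lemma partition_pos: "\<theta> \<in> \<Theta> \<Longrightarrow> partition \<theta> > 0"
proof -
  assume \<theta>: "\<theta> \<in> \<Theta>"
  have "partition \<theta> \<noteq> 0"
  proof
    assume "partition \<theta> = 0"
    then have "AE x in \<rho>. exp (x * \<theta>) = 0"
      using integral_nonneg_eq_0_iff_AE[OF integrable_exp[OF \<theta>]] by (simp add: partition_def)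
    then have "AE x in \<rho>. False" by simp
    then show False
      using emeasure_space_nonzero ae_filter_eq_bot_iff[of \<rho>] by (simp add: eventually_False)
  qed
  moreover have "partition \<theta> \<ge> 0" unfolding partition_def by simp
  ultimately show ?thesis by simp
qed

lemma param_nbhd:
  assumes "\<theta> \<in> \<Theta>"
  obtains h where "h > 0" "\<theta> + h \<in> \<Theta>" "\<theta> - h \<in> \<Theta>"
proof -
  obtain e where "e > 0" "ball \<theta> e \<subseteq> \<Theta>" using open_\<Theta> assms openE by blast
  then show thesis by (intro that[of "e / 2"]) (auto simp: dist_real_def)
qed

lemma integrable_x_exp: "\<theta> \<in> \<Theta> \<Longrightarrow> integrable \<rho> (\<lambda>x. x * exp (x * \<theta>))"
proof -
  assume "\<theta> \<in> \<Theta>"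
  then obtain h where h: "h > 0" "\<theta> + h \<in> \<Theta>" "\<theta> - h \<in> \<Theta>" by (rule param_nbhd)
  have bound: "\<bar>x * exp (x * \<theta>)\<bar> \<le> (exp (x * (\<theta> + h)) + exp (x * (\<theta> - h))) / h" for x
  proof -
    have "\<bar>x\<bar> * h \<le> exp (\<bar>x\<bar> * h)" using exp_ge_add_one_self[of "\<bar>x\<bar> * h"] by linarith
    also have "\<dots> \<le> exp (x * h) + exp (- (x * h))" by (cases "x \<ge> 0") auto
    finally have "\<bar>x\<bar> * exp (x * \<theta>) \<le> (exp (x * h) + exp (- (x * h))) / h * exp (x * \<theta>)"
      using h(1) by (intro mult_right_mono) (simp_all add: field_simps)
    also have "\<dots> = (exp (x * (\<theta> + h)) + exp (x * (\<theta> - h))) / h"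
      by (simp add: algebra_simps flip: exp_add)
    finally show ?thesis by (simp add: abs_mult)
  qed
  show ?thesis
  proof (rule Bochner_Integration.integrable_bound)
    show "integrable \<rho> (\<lambda>x. (exp (x * (\<theta> + h)) + exp (x * (\<theta> - h))) / h)"
      using integrable_exp[OF h(2)] integrable_exp[OF h(3)] by auto
    show "AE x in \<rho>. norm (x * exp (x * \<theta>)) \<le> norm ((exp (x * (\<theta> + h)) + exp (x * (\<theta> - h))) / h)"
      using bound h(1) by (auto intro!: AE_I2 order_trans[OF _ abs_ge_self])
  qed (intro borel_measurable_\<rho>; measurable)
qed

text \<open>Integrate \<open>exp u \<ge> 1 + u\<close> with \<open>u = x (\<theta>' - \<theta>) - c\<close>, \<open>c = (\<theta>' - \<theta>) mean \<theta>\<close>, against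
  \<open>exp (x \<theta>) \<partial>\<rho>\<close>: the linear term integrates to zero.\<close>

lemma cumulant_above_tangent:
  assumes "\<theta> \<in> \<Theta>" "\<theta>' \<in> \<Theta>"
  shows "cumulant \<rho> \<theta> + (\<theta>' - \<theta>) * mean \<theta> \<le> cumulant \<rho> \<theta>'"
proof -
  define c where "c = (\<theta>' - \<theta>) * mean \<theta>"
  have Z: "partition \<theta> > 0" "partition \<theta>' > 0" using partition_pos assms by auto
  have pointwise: "exp c * (exp (x * \<theta>) * (1 - c) + (\<theta>' - \<theta>) * (x * exp (x * \<theta>))) \<le> exp (x * \<theta>')"
    for x
  proof -
    have "(exp c * exp (x * \<theta>)) * (1 + (x * (\<theta>' - \<theta>) - c))
        \<le> (exp c * exp (x * \<theta>)) * exp (x * (\<theta>' - \<theta>) - c)"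
      by (intro mult_left_mono exp_ge_add_one_self) auto
    also have "\<dots> = exp (x * \<theta>')" by (simp flip: exp_add add: algebra_simps)
    finally show ?thesis by (simp add: algebra_simps)
  qed
  have "exp c * (partition \<theta> * (1 - c) + (\<theta>' - \<theta>) * first_moment \<theta>)
      = (\<integral>x. exp c * (exp (x * \<theta>) * (1 - c) + (\<theta>' - \<theta>) * (x * exp (x * \<theta>))) \<partial>\<rho>)"
    unfolding partition_def first_moment_def
    using integrable_exp[OF assms(1)] integrable_x_exp[OF assms(1)] by simp
  also have "\<dots> \<le> partition \<theta>'"
    unfolding partition_def
    by (rule integral_mono)
      (use pointwise integrable_exp[OF assms(1)] integrable_exp[OF assms(2)]
        integrable_x_exp[OF assms(1)] in auto)
  also have "(\<theta>' - \<theta>) * first_moment \<theta> = c * partition \<theta>"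
    unfolding c_def mean_def using Z by simp
  finally have "exp c * partition \<theta> \<le> partition \<theta>'" by (simp add: algebra_simps)
  then have "ln (exp c * partition \<theta>) \<le> ln (partition \<theta>')" using Z by simp
  then show ?thesis using Z by (simp add: ln_mult c_def cumulant_eq)
qed

lemma deriv_cumulant:
  assumes "\<theta> \<in> \<Theta>" "cumulant \<rho> differentiable (at \<theta>)"
  shows "deriv (cumulant \<rho>) \<theta> = mean \<theta>"
proof -
  define g where "g t = cumulant \<rho> t - (t - \<theta>) * mean \<theta>" for t
  have "DERIV g \<theta> :> deriv (cumulant \<rho>) \<theta> - 1 * mean \<theta>"
    unfolding g_def using assms(2) DERIV_deriv_iff_real_differentiable
    by (intro derivative_eq_intros) auto
  moreover obtain e where "e > 0" "ball \<theta> e \<subseteq> \<Theta>" using open_\<Theta> assms(1) openE by blast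
  moreover have "g \<theta> \<le> g t" if "t \<in> \<Theta>" for t
    using cumulant_above_tangent[OF assms(1) that] by (simp add: g_def)
  ultimately have "deriv (cumulant \<rho>) \<theta> - 1 * mean \<theta> = 0"
    by (intro DERIV_local_min[of g]) (auto simp: dist_real_def subset_iff abs_minus_commute)
  then show ?thesis by simp
qed

text \<open>\<open>\<rho>\<close> itself may be infinite; it is \<sigma>-finite because it has the positive density
  \<open>exp (- x \<theta>\<^sub>0)\<close> with respect to the finite measure \<open>exp (x \<theta>\<^sub>0) \<partial>\<rho>\<close>.\<close>

lemma sigma_finite_\<rho>: "sigma_finite_measure \<rho>"
proof -
  obtain \<theta>\<^sub>0 where \<theta>\<^sub>0: "\<theta>\<^sub>0 \<in> \<Theta>" using \<Theta>_nonempty by blast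
  define \<nu> where "\<nu> = density \<rho> (\<lambda>x. ennreal (exp (x * \<theta>\<^sub>0)))"
  have "emeasure \<nu> (space \<nu>) = (\<integral>\<^sup>+x. ennreal (exp (x * \<theta>\<^sub>0)) \<partial>\<rho>)"
    unfolding \<nu>_def by (simp add: emeasure_density borel_measurable_\<rho>)
  also have "\<dots> = ennreal (\<integral>x. exp (x * \<theta>\<^sub>0) \<partial>\<rho>)"
    using integrable_exp[OF \<theta>\<^sub>0] by (intro nn_integral_eq_integral) auto
  finally interpret \<nu>: finite_measure \<nu> by (intro finite_measureI) simp
  have "(\<lambda>x. ennreal (exp (- (x * \<theta>\<^sub>0)))) \<in> borel_measurable \<nu>"
    unfolding \<nu>_def by (simp, intro measurable_compose[OF _ measurable_ennreal] borel_measurable_\<rho>) measurable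
  then have "sigma_finite_measure (density \<nu> (\<lambda>x. ennreal (exp (- (x * \<theta>\<^sub>0)))))"
    using \<nu>.sigma_finite_iff_density_finite by simp
  also have "density \<nu> (\<lambda>x. ennreal (exp (- (x * \<theta>\<^sub>0))))
      = density \<rho> (\<lambda>x. ennreal (exp (x * \<theta>\<^sub>0)) * ennreal (exp (- (x * \<theta>\<^sub>0))))"
    unfolding \<nu>_def
    by (rule density_density_eq) (intro measurable_compose[OF _ measurable_ennreal] borel_measurable_\<rho>; measurable)+
  also have "(\<lambda>x. ennreal (exp (x * \<theta>\<^sub>0)) * ennreal (exp (- (x * \<theta>\<^sub>0)))) = (\<lambda>_. 1)"
    by (simp flip: ennreal_mult add: exp_minus)
  finally show ?thesis by (simp add: density_1)
qed

lemma KL_expfam: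
  assumes "\<theta> \<in> \<Theta>" "\<theta>' \<in> \<Theta>"
  shows "KL_divergence (exp 1) (expfam \<rho> \<theta>') (expfam \<rho> \<theta>)
       = (\<theta> - \<theta>') * mean \<theta> - cumulant \<rho> \<theta> + cumulant \<rho> \<theta>'"
proof -
  interpret \<rho>: sigma_finite_measure \<rho> by (rule sigma_finite_\<rho>)
  have Z: "partition \<theta> > 0" "partition \<theta>' > 0" using partition_pos assms by auto
  have density: "exp (x * \<theta> - cumulant \<rho> \<theta>) = exp (x * \<theta>) / partition \<theta>" for x
    using Z by (simp add: cumulant_eq exp_diff)
  have "KL_divergence (exp 1) (expfam \<rho> \<theta>') (expfam \<rho> \<theta>) =
    (\<integral>x. exp (x * \<theta> - cumulant \<rho> \<theta>) *
       log (exp 1) (exp (x * \<theta> - cumulant \<rho> \<theta>) / exp (x * \<theta>' - cumulant \<rho> \<theta>')) \<partial>\<rho>)"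
    unfolding expfam_def by (rule \<rho>.KL_density_density) (auto intro!: borel_measurable_\<rho>)
  also have "\<dots> = (\<integral>x. (\<theta> - \<theta>') / partition \<theta> * (x * exp (x * \<theta>))
      + (cumulant \<rho> \<theta>' - cumulant \<rho> \<theta>) / partition \<theta> * exp (x * \<theta>) \<partial>\<rho>)"
  proof (rule Bochner_Integration.integral_cong[OF refl])
    fix x
    have log_ratio: "log (exp 1) (exp (x * \<theta> - cumulant \<rho> \<theta>) / exp (x * \<theta>' - cumulant \<rho> \<theta>'))
        = (x * \<theta> - cumulant \<rho> \<theta>) - (x * \<theta>' - cumulant \<rho> \<theta>')"
      by (simp add: log_def flip: exp_diff)
    show "exp (x * \<theta> - cumulant \<rho> \<theta>) *
        log (exp 1) (exp (x * \<theta> - cumulant \<rho> \<theta>) / exp (x * \<theta>' - cumulant \<rho> \<theta>'))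
      = (\<theta> - \<theta>') / partition \<theta> * (x * exp (x * \<theta>))
        + (cumulant \<rho> \<theta>' - cumulant \<rho> \<theta>) / partition \<theta> * exp (x * \<theta>)"
      unfolding log_ratio unfolding density using Z by (simp add: field_simps)
  qed
  also have "\<dots> = (\<theta> - \<theta>') / partition \<theta> * first_moment \<theta>
      + (cumulant \<rho> \<theta>' - cumulant \<rho> \<theta>) / partition \<theta> * partition \<theta>"
    unfolding first_moment_def partition_def
    using integrable_exp[OF assms(1)] integrable_x_exp[OF assms(1)] by simp
  also have "\<dots> = (\<theta> - \<theta>') * mean \<theta> - cumulant \<rho> \<theta> + cumulant \<rho> \<theta>'"
    unfolding mean_def using Z by (simp add: field_simps)
  finally show ?thesis .
qed

end

locale exp_family_mean = exp_family +
  fixes M :: "real set"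
  assumes differentiable_cumulant: "\<theta> \<in> \<Theta> \<Longrightarrow> cumulant \<rho> differentiable (at \<theta>)"
    and mean_bij: "bij_betw (deriv (cumulant \<rho>)) \<Theta> M"
    and interval_M: "is_interval M"
begin

lemma mean_to_param_in: "\<mu> \<in> M \<Longrightarrow> mean_to_param \<rho> \<Theta> \<mu> \<in> \<Theta>"
  using bij_betw_inv_into[OF mean_bij] unfolding mean_to_param_def by (blast dest: bij_betwE)

lemma mean_mean_to_param: "\<mu> \<in> M \<Longrightarrow> mean (mean_to_param \<rho> \<Theta> \<mu>) = \<mu>"
  using bij_betw_inv_into_right[OF mean_bij] deriv_cumulant[OF mean_to_param_in]
    differentiable_cumulant[OF mean_to_param_in]
  by (simp add: mean_to_param_def)

lemma kl_mean_eq_bregman_mean: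
  assumes "a \<in> M" "z \<in> M"
  shows "kl_mean \<rho> \<Theta> a z = bregman_mean (mean_to_param \<rho> \<Theta>) (cumulant \<rho> \<circ> mean_to_param \<rho> \<Theta>) a z"
  using KL_expfam[OF mean_to_param_in[OF assms(1)] mean_to_param_in[OF assms(2)]]
    mean_mean_to_param[OF assms(1)]
  by (simp add: kl_mean_def bregman_mean_def)

sublocale nonneg_bregman_mean M "mean_to_param \<rho> \<Theta>" "cumulant \<rho> \<circ> mean_to_param \<rho> \<Theta>"
proof
  fix a z assume "a \<in> M" "z \<in> M"
  then show "0 \<le> bregman_mean (mean_to_param \<rho> \<Theta>) (cumulant \<rho> \<circ> mean_to_param \<rho> \<Theta>) a z"
    using cumulant_above_tangent[OF mean_to_param_in mean_to_param_in] mean_mean_to_param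
    by (simp add: bregman_mean_def algebra_simps)
qed (fact interval_M)

end

text \<open>If \<open>\<rho>\<close> were null, the cumulant would be constant and the mean map could not be
  injective on the open set \<open>\<Theta>\<close>.\<close>

lemma emeasure_space_nonzero_of_inj_deriv_cumulant:
  fixes \<rho> :: "real measure"
  assumes "inj_on (deriv (cumulant \<rho>)) \<Theta>" "open \<Theta>" "\<Theta> \<noteq> {}"
  shows "emeasure \<rho> (space \<rho>) \<noteq> 0"
proof
  assume "emeasure \<rho> (space \<rho>) = 0"
  then have "AE x in \<rho>. False"
    using ae_filter_eq_bot_iff[of \<rho>] by (simp add: eventually_False)
  then have "(\<integral>x. exp (x * t) \<partial>\<rho>) = 0" for t
    by (intro integral_eq_zero_AE) (auto elim: eventually_mono)
  then have "cumulant \<rho> = (\<lambda>_. 0)" by (simp add: cumulant_def fun_eq_iff)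
  then have "deriv (cumulant \<rho>) = (\<lambda>_. 0)" by simp
  moreover obtain t where "t \<in> \<Theta>" using assms(3) by blast
  ultimately have "\<Theta> = {t}" using assms(1) by (auto dest: inj_onD)
  then show False using assms(2) not_open_singleton by blast
qed

theorem mainTheorem6:
  fixes \<rho> :: "real measure" and \<Theta> M :: "real set"
    and w1 wi mu1 b1 bi mui y :: real
  assumes rho_borel: "sets \<rho> = sets borel"
    and Theta_open: "open \<Theta>" and Theta_interval: "is_interval \<Theta>" and Theta_ne: "\<Theta> \<noteq> {}"
    and integrable: "\<forall>\<theta>\<in>\<Theta>. integrable \<rho> (\<lambda>x. exp (x * \<theta>))"
    and differentiable: "\<forall>\<theta>\<in>\<Theta>. cumulant \<rho> differentiable (at \<theta>)"
    and mean_bij: "bij_betw (deriv (cumulant \<rho>)) \<Theta> M"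
    and M_open: "open M" and M_interval: "is_interval M"
    and w1: "w1 \<ge> 0" and wi: "wi \<ge> 0" and wpos: "w1 + wi > 0"
    and inM: "mu1 \<in> M" "b1 \<in> M" "bi \<in> M" "mui \<in> M"
    and order: "mui \<le> bi" "bi < b1" "b1 \<le> mu1"
    and y: "y \<in> {mui..mu1}"
  shows "(let lam = (w1 * b1 + wi * bi) / (w1 + wi) in
           w1 * kl_mean \<rho> \<Theta> mu1 y + wi * kl_mean \<rho> \<Theta> mui y
           \<ge> w1 * kl_mean \<rho> \<Theta> b1 lam + wi * kl_mean \<rho> \<Theta> bi lam)"
proof -
  have "emeasure \<rho> (space \<rho>) \<noteq> 0"
    using emeasure_space_nonzero_of_inj_deriv_cumulant bij_betw_imp_inj_on[OF mean_bij]
      Theta_open Theta_ne by blast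
  then interpret exp_family_mean \<rho> \<Theta> M
    using assms by unfold_locales auto
  define lam where "lam = (w1 * b1 + wi * bi) / (w1 + wi)"
  have "b1 \<in> {mui..mu1}" "bi \<in> {mui..mu1}" "lam \<in> {bi..b1}"
    using order w1 wi wpos mult_left_mono[of bi b1 w1] mult_left_mono[of bi b1 wi]
    by (auto simp: lam_def field_simps)
  then have "y \<in> M" "lam \<in> M"
    using y inM by (auto intro: mem_between)
  then show ?thesis
    using weighted_bregman_mean_bound[OF w1 wi wpos inM(1,4) order(1) less_imp_le[OF order(2)] order(3) y]
    by (simp add: Let_def lam_def[symmetric] kl_mean_eq_bregman_mean inM)
qed

end
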